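(* Let $G=(V,E)$ be a finite connected graph with positive edge weights $(\theta_e)$, let $T(G)$ be its universal cover with covering map $\pi:T(G)\to G$ (edge weights inherited through $\pi$), and fix $z>0$. Let $\mathbf{y}(z)\in(0,\infty)^{\vec{E}}$ be the unique solution of $\mathbf{y}(z)=z\mathcal{R}_G(\mathbf{y}(z))$ and $\tilde{\mathbf{y}}(z)\in(0,\infty)^{\vec{E}(T(G))}$ the unique solution of $\tilde{\mathbf{y}}(z)=z\mathcal{R}_{T(G)}(\tilde{\mathbf{y}}(z))$. Then $\tilde{y}_{\vec{e}}(z)=y_{\pi(\vec{e})}(z)$ for every directed edge $\vec{e}$ of $T(G)$.
   Context: For a weighted graph $H$ with directed edge set $\vec{E}$ (two orientations $u\to v$, $v\to u$ per edge $uv$), the map $\mathcal{R}_H:(0,\infty)^{\vec{E}}\to(0,\infty)^{\vec{E}}$ is $\mathcal{R}_H(\mathbf{a})_{u\to v}=\big(1+\sum_{w\in\partial u\setminus v}\theta_{wu}a_{w\to u}\big)^{-1}$, where $\partial u\setminus v$ is the set of neighbours of $u$ other than $v$ and empty sums are $0$; $z\mathcal{R}_H$ multiplies each component by $z$. The universal cover $T(G)$ is the tree whose vertices are the finite non-backtracking walks in $G$ from a fixed vertex, two walks adjacent if one is a one-step extension of the other; $\pi$ maps a walk to its endpoint (and edges/directed edges accordingly). Existence and uniqueness of both fixed points are given. *)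

theory Defs
  imports Complex_Main
begin

text \<open>Directed edges are pairs (u,v) with adj u v.  Vectors indexed by directed
  edges are functions on pairs; only their values on directed edges matter.\<close>

definition RH :: "('v \<Rightarrow> 'v \<Rightarrow> bool) \<Rightarrow> ('v \<Rightarrow> 'v \<Rightarrow> real) \<Rightarrow> ('v \<times> 'v \<Rightarrow> real) \<Rightarrow> ('v \<times> 'v \<Rightarrow> real)" where
  "RH adj th a = (\<lambda>(u, v). 1 / (1 + (\<Sum>w\<in>{w. adj w u \<and> w \<noteq> v}. th w u * a (w, u))))"

definition is_pos_fp :: "('v \<Rightarrow> 'v \<Rightarrow> bool) \<Rightarrow> ('v \<Rightarrow> 'v \<Rightarrow> real) \<Rightarrow> real \<Rightarrow> ('v \<times> 'v \<Rightarrow> real) \<Rightarrow> bool" where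
  "is_pos_fp adj th z a \<longleftrightarrow>
     (\<forall>u v. adj u v \<longrightarrow> a (u, v) > 0 \<and> a (u, v) = z * RH adj th a (u, v))"

definition nb_walks :: "('a \<Rightarrow> 'a \<Rightarrow> bool) \<Rightarrow> 'a \<Rightarrow> 'a list set" where
  "nb_walks E v0 = {xs. xs \<noteq> [] \<and> hd xs = v0 \<and>
      (\<forall>i. i + 1 < length xs \<longrightarrow> E (xs ! i) (xs ! (i + 1))) \<and>
      (\<forall>i. i + 2 < length xs \<longrightarrow> xs ! (i + 2) \<noteq> xs ! i)}"

text \<open>Adjacency of the universal cover T(G): one walk is a one-step extension of the other.\<close>
definition cover_adj :: "('a \<Rightarrow> 'a \<Rightarrow> bool) \<Rightarrow> 'a \<Rightarrow> 'a list \<Rightarrow> 'a list \<Rightarrow> bool" where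
  "cover_adj E v0 xs ys \<longleftrightarrow> xs \<in> nb_walks E v0 \<and> ys \<in> nb_walks E v0 \<and>
      ((\<exists>x. ys = xs @ [x]) \<or> (\<exists>x. xs = ys @ [x]))"

definition cover_proj :: "'a list \<Rightarrow> 'a" where
  "cover_proj xs = last xs"

definition cover_weight :: "('a \<Rightarrow> 'a \<Rightarrow> real) \<Rightarrow> 'a list \<Rightarrow> 'a list \<Rightarrow> real" where
  "cover_weight th xs ys = th (cover_proj xs) (cover_proj ys)"

end

theory Submission
  imports Defs
begin

text \<open>Pulling y back along the covering map gives a positive fixed point of
  z R_{T(G)}: the covering map sends the neighbours of each walk bijectively and
  weight-preservingly onto the neighbours of its endpoint, so the sum defining
  R_{T(G)} at a directed edge of T(G) is a reindexing of the sum defining R_G at its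
  image. Uniqueness of the fixed point on T(G) then forces it to be the pulled-back y.\<close>

lemma RH_pullback:
  assumes bij: "bij_betw p {w. adjH w x} {u. adjG u (p x)}"
    and "adjH y x"
    and weights: "\<And>w. adjH w x \<Longrightarrow> thH w x = thG (p w) (p x)"
  shows "RH adjH thH (\<lambda>(u, v). a (p u, p v)) (x, y) = RH adjG thG a (p x, p y)"
proof -
  have "bij_betw p ({w. adjH w x} - {y}) ({u. adjG u (p x)} - {p y})"
    using bij_betw_DiffI[OF bij, of "{y}" "{p y}"] \<open>adjH y x\<close> bij_betwE[OF bij] by blast
  then have bij': "bij_betw p {w. adjH w x \<and> w \<noteq> y} {u. adjG u (p x) \<and> u \<noteq> p y}"
    by (simp add: set_diff_eq)
  have "(\<Sum>w\<in>{w. adjH w x \<and> w \<noteq> y}. thH w x * a (p w, p x))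
      = (\<Sum>w\<in>{w. adjH w x \<and> w \<noteq> y}. thG (p w) (p x) * a (p w, p x))"
    by (simp add: weights)
  also have "\<dots> = (\<Sum>u\<in>{u. adjG u (p x) \<and> u \<noteq> p y}. thG u (p x) * a (u, p x))"
    by (rule sum.reindex_bij_betw[OF bij'])
  finally show ?thesis by (simp add: RH_def)
qed

lemma is_pos_fp_pullback:
  assumes fp: "is_pos_fp adjG thG z a"
    and hom: "\<And>u v. adjH u v \<Longrightarrow> adjG (p u) (p v)"
    and sym: "\<And>u v. adjH u v \<Longrightarrow> adjH v u"
    and local_bij: "\<And>x y. adjH x y \<Longrightarrow> bij_betw p {w. adjH w x} {u. adjG u (p x)}"
    and weights: "\<And>u v. adjH u v \<Longrightarrow> thH u v = thG (p u) (p v)"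
  shows "is_pos_fp adjH thH z (\<lambda>(u, v). a (p u, p v))"
  unfolding is_pos_fp_def
proof (intro allI impI)
  fix x y assume xy: "adjH x y"
  have "RH adjH thH (\<lambda>(u, v). a (p u, p v)) (x, y) = RH adjG thG a (p x, p y)"
    using local_bij[OF xy] sym[OF xy] weights by (rule RH_pullback)
  moreover have "a (p x, p y) > 0 \<and> a (p x, p y) = z * RH adjG thG a (p x, p y)"
    using fp hom[OF xy] unfolding is_pos_fp_def by blast
  ultimately show "(case (x, y) of (u, v) \<Rightarrow> a (p u, p v)) > 0 \<and>
      (case (x, y) of (u, v) \<Rightarrow> a (p u, p v)) = z * RH adjH thH (\<lambda>(u, v). a (p u, p v)) (x, y)"
    by simp
qed

lemma snoc_in_nb_walks_iff:
  assumes "xs \<in> nb_walks E v0"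
  shows "xs @ [x] \<in> nb_walks E v0 \<longleftrightarrow>
    E (last xs) x \<and> (2 \<le> length xs \<longrightarrow> x \<noteq> xs ! (length xs - 2))"
proof -
  obtain m where m: "length xs = Suc m" using assms by (cases xs) (auto simp: nb_walks_def)
  then have "last xs = xs ! m" by (metis diff_Suc_1 last_conv_nth list.size(3) nat.distinct(1))
  then have edges: "(\<forall>i. i + 1 < length (xs @ [x]) \<longrightarrow> E ((xs @ [x]) ! i) ((xs @ [x]) ! (i + 1)))
      \<longleftrightarrow> (\<forall>i. i + 1 < length xs \<longrightarrow> E (xs ! i) (xs ! (i + 1))) \<and> E (last xs) x"
    using m All_less_Suc[where n = m and P = "\<lambda>i. E ((xs @ [x]) ! i) ((xs @ [x]) ! (i + 1))"]
    by (auto simp: nth_append)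
  have turns: "(\<forall>i. i + 2 < length (xs @ [x]) \<longrightarrow> (xs @ [x]) ! (i + 2) \<noteq> (xs @ [x]) ! i)
      \<longleftrightarrow> (\<forall>i. i + 2 < length xs \<longrightarrow> xs ! (i + 2) \<noteq> xs ! i) \<and>
          (2 \<le> length xs \<longrightarrow> x \<noteq> xs ! (length xs - 2))"
  proof (cases m)
    case (Suc k)
    then show ?thesis
      using m All_less_Suc[where n = k and P = "\<lambda>i. (xs @ [x]) ! (i + 2) \<noteq> (xs @ [x]) ! i"]
      by (auto simp: nth_append)
  qed (use m in auto)
  show ?thesis using assms unfolding nb_walks_def mem_Collect_eq edges turns by auto
qed

lemma nb_walks_snocD:
  assumes xsx: "xs @ [x] \<in> nb_walks E v0" and "xs \<noteq> []"
  shows "xs \<in> nb_walks E v0"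
proof -
  have "E (xs ! i) (xs ! (i + 1))" if "i + 1 < length xs" for i
    using xsx that unfolding nb_walks_def by (auto simp: nth_append dest!: spec[of _ i])
  moreover have "xs ! (i + 2) \<noteq> xs ! i" if "i + 2 < length xs" for i
    using xsx that unfolding nb_walks_def by (auto simp: nth_append dest!: spec[of _ i])
  ultimately show ?thesis using assms unfolding nb_walks_def by auto
qed

lemma cover_adj_sym: "cover_adj E v0 xs ys \<longleftrightarrow> cover_adj E v0 ys xs"
  unfolding cover_adj_def by blast

lemma cover_adj_imp_edge:
  assumes "cover_adj E v0 xs ys" and E_sym: "\<And>u v. E u v \<Longrightarrow> E v u"
  shows "E (last xs) (last ys)"
  using assms(1) unfolding cover_adj_def
  by (auto simp: snoc_in_nb_walks_iff intro: E_sym)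

lemma butlast_in_nb_walks:
  assumes "xs \<in> nb_walks E v0" "2 \<le> length xs"
  shows "butlast xs \<in> nb_walks E v0"
proof -
  have "xs = butlast xs @ [last xs]" "butlast xs \<noteq> []"
    using assms by (cases xs rule: rev_cases; auto)+
  then show ?thesis using assms(1) nb_walks_snocD by metis
qed

lemma last_butlast_eq_nth:
  assumes "2 \<le> length xs"
  shows "last (butlast xs) = xs ! (length xs - 2)"
proof -
  obtain ys u w where "xs = ys @ [u, w]"
    using assms
    by (cases xs rule: rev_cases; cases "butlast xs" rule: rev_cases) auto
  then show ?thesis by (simp add: nth_append butlast_append)
qed

lemma cover_adj_iff_parent_or_child:
  assumes xs: "xs \<in> nb_walks E v0"
  shows "cover_adj E v0 ws xs \<longleftrightarrow>
    (2 \<le> length xs \<and> ws = butlast xs) \<or> (\<exists>w. ws = xs @ [w] \<and> xs @ [w] \<in> nb_walks E v0)"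
proof
  assume "cover_adj E v0 ws xs"
  then have "ws \<noteq> []" and "(\<exists>x. xs = ws @ [x]) \<or> (\<exists>x. ws = xs @ [x])"
    and "ws \<in> nb_walks E v0"
    by (auto simp: cover_adj_def nb_walks_def)
  then show "(2 \<le> length xs \<and> ws = butlast xs) \<or> (\<exists>w. ws = xs @ [w] \<and> xs @ [w] \<in> nb_walks E v0)"
    by (cases ws) auto
next
  assume "(2 \<le> length xs \<and> ws = butlast xs) \<or> (\<exists>w. ws = xs @ [w] \<and> xs @ [w] \<in> nb_walks E v0)"
  then show "cover_adj E v0 ws xs"
  proof
    assume parent: "2 \<le> length xs \<and> ws = butlast xs"
    then have "xs = ws @ [last xs]" by (cases xs rule: rev_cases) auto
    with parent xs butlast_in_nb_walks[OF xs] show ?thesis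
      unfolding cover_adj_def by blast
  next
    assume "\<exists>w. ws = xs @ [w] \<and> xs @ [w] \<in> nb_walks E v0"
    with xs show ?thesis unfolding cover_adj_def by blast
  qed
qed

lemma bij_betw_last_cover_neighbours:
  assumes xs: "xs \<in> nb_walks E v0" and E_sym: "\<And>u v. E u v \<Longrightarrow> E v u"
  shows "bij_betw last {ws. cover_adj E v0 ws xs} {w. E w (last xs)}"
proof -
  define lift where "lift w = (if 2 \<le> length xs \<and> w = xs ! (length xs - 2)
    then butlast xs else xs @ [w])" for w
  show ?thesis
  proof (rule bij_betw_byWitness[where f' = lift])
    show "\<forall>ws\<in>{ws. cover_adj E v0 ws xs}. lift (last ws) = ws"
    proof
      fix ws assume "ws \<in> {ws. cover_adj E v0 ws xs}"
      then consider "2 \<le> length xs" "ws = butlast xs"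
        | w where "ws = xs @ [w]" "xs @ [w] \<in> nb_walks E v0"
        using cover_adj_iff_parent_or_child[OF xs] by auto
      then show "lift (last ws) = ws"
        by cases (auto simp: lift_def last_butlast_eq_nth snoc_in_nb_walks_iff[OF xs])
    qed
    show "\<forall>w\<in>{w. E w (last xs)}. last (lift w) = w"
      by (simp add: lift_def last_butlast_eq_nth)
    show "last ` {ws. cover_adj E v0 ws xs} \<subseteq> {w. E w (last xs)}"
      using cover_adj_imp_edge[of E v0, OF _ E_sym] by blast
    show "lift ` {w. E w (last xs)} \<subseteq> {ws. cover_adj E v0 ws xs}"
    proof clarify
      fix w assume "E w (last xs)"
      then have "E (last xs) w" by (rule E_sym)
      then show "cover_adj E v0 (lift w) xs"
        by (simp add: lift_def cover_adj_iff_parent_or_child[OF xs] snoc_in_nb_walks_iff[OF xs])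
    qed
  qed
qed

theorem proposition4p11:
  fixes V :: "'a set" and E :: "'a \<Rightarrow> 'a \<Rightarrow> bool" and th :: "'a \<Rightarrow> 'a \<Rightarrow> real"
    and v0 :: 'a and z :: real
    and y :: "'a \<times> 'a \<Rightarrow> real" and yt :: "'a list \<times> 'a list \<Rightarrow> real"
  assumes finV: "finite V"
    and E_in_V: "\<And>u v. E u v \<Longrightarrow> u \<in> V \<and> v \<in> V"
    and E_sym: "\<And>u v. E u v \<Longrightarrow> E v u"
    and E_irrefl: "\<And>u. \<not> E u u"
    and connected: "\<And>u v. u \<in> V \<Longrightarrow> v \<in> V \<Longrightarrow> E\<^sup>*\<^sup>* u v"
    and th_pos: "\<And>u v. E u v \<Longrightarrow> th u v > 0"
    and th_sym: "\<And>u v. th u v = th v u"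
    and v0: "v0 \<in> V"
    and z: "z > 0"
    and y_fp: "is_pos_fp E th z y"
    and y_unique: "\<And>b. is_pos_fp E th z b \<Longrightarrow> (\<forall>u v. E u v \<longrightarrow> b (u, v) = y (u, v))"
    and yt_fp: "is_pos_fp (cover_adj E v0) (cover_weight th) z yt"
    and yt_unique: "\<And>b. is_pos_fp (cover_adj E v0) (cover_weight th) z b \<Longrightarrow>
        (\<forall>xs ys. cover_adj E v0 xs ys \<longrightarrow> b (xs, ys) = yt (xs, ys))"
  shows "\<forall>xs ys. cover_adj E v0 xs ys \<longrightarrow> yt (xs, ys) = y (cover_proj xs, cover_proj ys)"
proof -
  have "is_pos_fp (cover_adj E v0) (cover_weight th) z (\<lambda>(xs, ys). y (last xs, last ys))"
  proof (rule is_pos_fp_pullback[OF y_fp])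
    fix xs ys assume "cover_adj E v0 xs ys"
    then have "xs \<in> nb_walks E v0" by (simp add: cover_adj_def)
    from this E_sym show "bij_betw last {ws. cover_adj E v0 ws xs} {w. E w (last xs)}"
      by (rule bij_betw_last_cover_neighbours)
  qed (auto simp: cover_weight_def cover_proj_def cover_adj_sym intro: cover_adj_imp_edge E_sym)
  from yt_unique[OF this] show ?thesis by (simp add: cover_proj_def)
qed

end
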